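(* Let $q$ be a prime power, $1\le k<n\le m$, let $g_1,\dots,g_n\in\mathbb{F}_{q^m}$ be linearly independent over $\mathbb{F}_q$, and let $\mathcal{G}$ be the Gabidulin code of dimension $k$ with respect to $g_1,\dots,g_n$. Then for every $f\in\mathcal{L}_q(x,\mathbb{F}_{q^m})$ with $\deg_q(f)=k$, the word $\sigma_f=(f(g_1),\dots,f(g_n))$ satisfies $d_H(\sigma_f,\mathcal{G})=n-k$, i.e. it is a deep hole of $\mathcal{G}$ in the Hamming metric (the Hamming covering radius of $\mathcal{G}$ being $n-k$). In particular $\mathcal{G}$ has at least $(q^m-1)q^{mk}$ deep holes in the Hamming metric.
   Context: A $q$-linearized polynomial over $\mathbb{F}_{q^m}$ is $L(x)=\sum_{i=0}^{d}a_ix^{q^i}$, $a_i\in\mathbb{F}_{q^m}$; if $a_d\ne0$, $d=\deg_q(L)$. $\mathcal{L}_q(x,\mathbb{F}_{q^m})$ is the set of these. $d_H$ is the Hamming distance, $d_H(\mathbf{u},C)=\min_{\mathbf{c}\in C}d_H(\mathbf{u},\mathbf{c})$; a deep hole in the Hamming metric is a word whose Hamming distance to the code equals the maximum over all words. The Gabidulin code of dimension $k$ with respect to $\mathbb{F}_q$-linearly independent $g_1,\dots,g_n$ is $\mathcal{G}=\{(v(g_1),\dots,v(g_n)) : v\in\mathcal{L}_q(x,\mathbb{F}_{q^m}),\ v=0\text{ or }\deg_q(v)<k\}$. *)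

theory Defs
  imports Main "HOL-Computational_Algebra.Primes"
begin

definition is_subfield :: "'a::field set \<Rightarrow> bool" where
  "is_subfield K \<longleftrightarrow> 0 \<in> K \<and> 1 \<in> K \<and>
     (\<forall>x\<in>K. \<forall>y\<in>K. x + y \<in> K \<and> x * y \<in> K) \<and>
     (\<forall>x\<in>K. - x \<in> K) \<and> (\<forall>x\<in>K. x \<noteq> 0 \<longrightarrow> inverse x \<in> K)"

definition prime_power :: "nat \<Rightarrow> bool" where
  "prime_power q \<longleftrightarrow> (\<exists>p e. prime p \<and> e \<ge> 1 \<and> q = p ^ e)"

text \<open>q-linearized polynomials: finitely supported coefficient sequences a,
  representing L(x) = sum_i a_i x^(q^i).\<close>
definition linpolys :: "(nat \<Rightarrow> 'a::field) set" where
  "linpolys = {a. finite {i. a i \<noteq> 0}}"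

definition lin_eval :: "nat \<Rightarrow> (nat \<Rightarrow> 'a::field) \<Rightarrow> 'a \<Rightarrow> 'a" where
  "lin_eval q a x = (\<Sum>i\<in>{i. a i \<noteq> 0}. a i * x ^ (q ^ i))"

definition qdeg :: "(nat \<Rightarrow> 'a::field) \<Rightarrow> nat" where
  "qdeg a = Max {i. a i \<noteq> 0}"

definition lin_indep_over :: "'a::field set \<Rightarrow> 'a list \<Rightarrow> bool" where
  "lin_indep_over K g \<longleftrightarrow>
     (\<forall>c. (\<forall>i<length g. c i \<in> K) \<longrightarrow> (\<Sum>i<length g. c i * g ! i) = 0 \<longrightarrow>
          (\<forall>i<length g. c i = 0))"

definition eval_word :: "nat \<Rightarrow> (nat \<Rightarrow> 'a::field) \<Rightarrow> 'a list \<Rightarrow> 'a list" where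
  "eval_word q v g = map (lin_eval q v) g"

definition gabidulin :: "nat \<Rightarrow> nat \<Rightarrow> 'a::field list \<Rightarrow> 'a list set" where
  "gabidulin q k g = {eval_word q v g | v. v \<in> linpolys \<and> (v = (\<lambda>_. 0) \<or> qdeg v < k)}"

definition hamming_dist :: "'a list \<Rightarrow> 'a list \<Rightarrow> nat" where
  "hamming_dist u v = card {i. i < length u \<and> u ! i \<noteq> v ! i}"

definition dist_to_code :: "'a list \<Rightarrow> 'a list set \<Rightarrow> nat" where
  "dist_to_code u C = Min ((\<lambda>c. hamming_dist u c) ` C)"

definition words :: "nat \<Rightarrow> 'a list set" where
  "words n = {w. length w = n}"

definition covering_radius :: "nat \<Rightarrow> 'a list set \<Rightarrow> nat" where
  "covering_radius n C = Max ((\<lambda>w. dist_to_code w C) ` words n)"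

definition deep_hole :: "nat \<Rightarrow> 'a list set \<Rightarrow> 'a list \<Rightarrow> bool" where
  "deep_hole n C u \<longleftrightarrow> u \<in> words n \<and> dist_to_code u C = covering_radius n C"

end

theory Submission
  imports Defs "HOL-Computational_Algebra.Polynomial" "HOL-Library.FuncSet"
begin

text \<open>
  Over a finite subfield \<open>K\<close> of order \<open>q\<close>, the map \<open>x \<mapsto> h(x)\<close> of a \<open>q\<close>-linearized
  polynomial is \<open>K\<close>-linear, so if \<open>h \<noteq> 0\<close> has \<open>q\<close>-degree at most \<open>D\<close> and vanishes at \<open>t\<close>
  of the \<open>K\<close>-independent points \<open>g\<^sub>i\<close>, their span gives \<open>q\<^sup>t\<close> roots of a polynomial of
  degree \<open>q\<^sup>D\<close>; hence \<open>t \<le> D\<close>. Applied to \<open>f - v\<close> for a codeword \<open>v\<close>, this says that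
  \<open>\<sigma>\<^sub>f\<close> agrees with any codeword in at most \<open>k\<close> places, i.e. its distance to the code is at
  least \<open>n - k\<close>. Applied with \<open>D = k - 1\<close> it shows that codewords are determined by their
  first \<open>k\<close> entries, so by counting every prefix of length \<open>k\<close> is attained and every word
  lies within distance \<open>n - k\<close> of the code. Applied with \<open>D = k\<close> and all \<open>n > k\<close> points it
  shows that \<open>f \<mapsto> \<sigma>\<^sub>f\<close> is injective on the \<open>(q\<^sup>m - 1) q\<^sup>m\<^sup>k\<close> polynomials of
  \<open>q\<close>-degree exactly \<open>k\<close>.
\<close>

section \<open>Linearized polynomials\<close>

lemma lin_eval_eq_sum_atMost:
  assumes "\<And>i. D < i \<Longrightarrow> a i = 0"
  shows "lin_eval q a x = (\<Sum>i\<le>D. a i * x ^ (q ^ i))"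
  unfolding lin_eval_def
  by (rule sum.mono_neutral_left) (use assms in \<open>auto simp flip: not_le\<close>)

lemma lin_eval_diff:
  assumes "\<And>i. D < i \<Longrightarrow> a i = 0" "\<And>i. D < i \<Longrightarrow> b i = 0"
  shows "lin_eval q (\<lambda>i. a i - b i) x = lin_eval q a x - lin_eval q b x"
  using assms by (simp add: lin_eval_eq_sum_atMost[of D] sum_subtractf left_diff_distrib)

lemma lin_eval_add:
  assumes "\<And>i x y :: 'a::field. (x + y) ^ (q ^ i) = x ^ (q ^ i) + y ^ (q ^ i)"
  shows "lin_eval q a (x + y) = lin_eval q a x + lin_eval q a (y :: 'a)"
  by (simp add: lin_eval_def assms distrib_left sum.distrib)

lemma lin_eval_mult_const:
  assumes "\<And>i. c ^ (q ^ i) = (c :: 'a::field)"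
  shows "lin_eval q a (c * x) = c * lin_eval q a x"
  by (simp add: lin_eval_def power_mult_distrib assms sum_distrib_left mult.left_commute)

lemma lin_eval_poly:
  fixes a :: "nat \<Rightarrow> 'a::field"
  assumes q: "2 \<le> q" and supp: "\<And>i. D < i \<Longrightarrow> a i = 0" and nz: "a j \<noteq> 0"
  obtains p where "p \<noteq> 0" "degree p \<le> q ^ D" "\<And>x. poly p x = lin_eval q a x"
proof
  define p where "p = (\<Sum>i\<le>D. monom (a i) (q ^ i))"
  show "poly p x = lin_eval q a x" for x
    by (simp add: p_def poly_sum poly_monom lin_eval_eq_sum_atMost[OF supp])
  have "j \<le> D" using supp nz by (meson not_le)
  have "inj (\<lambda>i. q ^ i)" using q by (simp add: inj_on_def)
  hence "coeff p (q ^ j) = (\<Sum>i\<le>D. if i = j then a i else 0)"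
    by (simp add: p_def coeff_sum inj_eq)
  also have "\<dots> = a j" using \<open>j \<le> D\<close> by simp
  finally show "p \<noteq> 0" using nz by auto
  show "degree p \<le> q ^ D"
    unfolding p_def
    by (rule degree_sum_le) (use q in \<open>auto intro!: order.trans[OF degree_monom_le] power_increasing\<close>)
qed

lemma lin_eval_zeros:
  fixes a :: "nat \<Rightarrow> 'a::field"
  assumes "2 \<le> q" "\<And>i. D < i \<Longrightarrow> a i = 0" "a j \<noteq> 0"
  shows finite_lin_eval_zeros: "finite {x. lin_eval q a x = 0}"
    and card_lin_eval_zeros_le: "card {x. lin_eval q a x = 0} \<le> q ^ D"
proof -
  obtain p where p: "p \<noteq> 0" "degree p \<le> q ^ D" "\<And>x. poly p x = lin_eval q a x"
    using lin_eval_poly[of q D a j] assms by blast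
  show "finite {x. lin_eval q a x = 0}" using poly_roots_finite[OF p(1)] by (simp add: p(3))
  show "card {x. lin_eval q a x = 0} \<le> q ^ D"
    using card_poly_roots_bound[OF p(1)] p(2,3) by simp
qed

lemma coeff_eq_0_above_qdeg:
  assumes "f \<in> linpolys" "qdeg f < i"
  shows "f i = 0"
proof (rule ccontr)
  assume "f i \<noteq> 0"
  hence "i \<le> qdeg f" using assms(1) unfolding qdeg_def linpolys_def by simp
  thus False using assms(2) by simp
qed

lemma coeff_qdeg_nonzero:
  assumes "f \<in> linpolys" "f \<noteq> (\<lambda>_. 0)"
  shows "f (qdeg f) \<noteq> 0"
  using assms Max_in[of "{i. f i \<noteq> 0}"] by (auto simp: linpolys_def qdeg_def)

lemma qdeg_eqI:
  assumes "\<And>i. k < i \<Longrightarrow> f i = 0" "f k \<noteq> 0"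
  shows "f \<in> linpolys" "qdeg f = k"
proof -
  have sub: "{i. f i \<noteq> 0} \<subseteq> {..k}" using assms(1) by (auto simp flip: not_le)
  hence fin: "finite {i. f i \<noteq> 0}" by (rule finite_subset) simp
  thus "f \<in> linpolys" by (simp add: linpolys_def)
  show "qdeg f = k" unfolding qdeg_def
    by (rule Max_eqI[OF fin]) (use sub assms(2) in auto)
qed

definition qpolys_below :: "nat \<Rightarrow> (nat \<Rightarrow> 'a::zero) set" where
  "qpolys_below D = {v. \<forall>i\<ge>D. v i = 0}"

lemma qpolys_below_mono: "D \<le> E \<Longrightarrow> qpolys_below D \<subseteq> qpolys_below E"
  by (auto simp: qpolys_below_def)

lemma gabidulin_eq_image: "gabidulin q k g = (\<lambda>v. eval_word q v g) ` qpolys_below k"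
proof -
  have "v \<in> linpolys \<and> (v = (\<lambda>_. 0) \<or> qdeg v < k) \<longleftrightarrow> v \<in> qpolys_below k" for v :: "nat \<Rightarrow> 'a"
  proof
    assume "v \<in> linpolys \<and> (v = (\<lambda>_. 0) \<or> qdeg v < k)"
    thus "v \<in> qpolys_below k"
      using coeff_eq_0_above_qdeg[of v] by (auto simp: qpolys_below_def)
  next
    assume v: "v \<in> qpolys_below k"
    hence sub: "{i. v i \<noteq> 0} \<subseteq> {..<k}" by (auto simp: qpolys_below_def simp flip: not_le)
    hence "v \<in> linpolys" by (auto simp: linpolys_def intro: finite_subset)
    moreover have "qdeg v < k" if "v \<noteq> (\<lambda>_. 0)"
      using coeff_qdeg_nonzero[OF \<open>v \<in> linpolys\<close> that] sub by auto
    ultimately show "v \<in> linpolys \<and> (v = (\<lambda>_. 0) \<or> qdeg v < k)" by blast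
  qed
  thus ?thesis unfolding gabidulin_def by blast
qed

lemma finite_words: "finite (words n :: 'a::finite list set)"
  using finite_lists_length_eq[of "UNIV :: 'a set" n] by (simp add: words_def)

lemma card_words: "card (words n :: 'a::finite list set) = card (UNIV :: 'a set) ^ n"
  using card_lists_length_eq[of "UNIV :: 'a set" n] by (simp add: words_def)

lemma bij_betw_qpolys_below_words: "bij_betw (\<lambda>v. map v [0..<D]) (qpolys_below D) (words D)"
  by (rule bij_betw_byWitness[where f'="\<lambda>xs i. if i < D then xs ! i else 0"])
     (auto simp: qpolys_below_def words_def fun_eq_iff intro: nth_equalityI)

lemma finite_qpolys_below: "finite (qpolys_below D :: (nat \<Rightarrow> 'a::{zero,finite}) set)"
  using bij_betw_finite[OF bij_betw_qpolys_below_words[where 'a='a]] finite_words by blast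

lemma card_qpolys_below:
  "card (qpolys_below D :: (nat \<Rightarrow> 'a::{zero,finite}) set) = card (UNIV :: 'a set) ^ D"
  using bij_betw_same_card[OF bij_betw_qpolys_below_words[where 'a='a]] by (simp add: card_words)

lemma card_qpolys_below_Suc_diff:
  "card (qpolys_below (Suc D) - qpolys_below D :: (nat \<Rightarrow> 'a::{zero,finite}) set)
     = (card (UNIV :: 'a set) - 1) * card (UNIV :: 'a set) ^ D"
  using qpolys_below_mono[of D "Suc D", where 'a='a]
  by (simp add: card_Diff_subset finite_qpolys_below card_qpolys_below diff_mult_distrib)

lemma qdeg_eq_if_mem_qpolys_below_Suc_diff:
  assumes "f \<in> qpolys_below (Suc k) - qpolys_below k"
  shows "f \<in> linpolys" "f \<noteq> (\<lambda>_. 0)" "qdeg f = k"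
proof -
  have "f k \<noteq> 0" "\<And>i. k < i \<Longrightarrow> f i = 0"
    using assms by (auto simp: qpolys_below_def) (metis le_antisym not_less_eq_eq)
  thus "f \<in> linpolys" "f \<noteq> (\<lambda>_. 0)" "qdeg f = k" using qdeg_eqI[of k f] by auto
qed

lemma hamming_dist_eq_diff_card_agree:
  assumes "length v = length u"
  shows "hamming_dist u v = length u - card {i. i < length u \<and> u ! i = v ! i}"
proof -
  define A where "A = {i. i < length u \<and> u ! i = v ! i}"
  have "{i. i < length u \<and> u ! i \<noteq> v ! i} = {..<length u} - A" by (auto simp: A_def)
  moreover have "A \<subseteq> {..<length u}" by (auto simp: A_def)
  ultimately show ?thesis
    by (simp add: hamming_dist_def card_Diff_subset finite_subset flip: A_def)
qed

lemma hamming_dist_le_if_take_eq: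
  assumes "length u = n" "length v = n" "take k u = take k v"
  shows "hamming_dist u v \<le> n - k"
proof -
  have "u ! i = v ! i" if "i < k" for i
    using nth_take[OF that, of u] nth_take[OF that, of v] assms(3) by simp
  hence "{i. i < length u \<and> u ! i \<noteq> v ! i} \<subseteq> {k..<n}"
    using assms(1) by (auto simp flip: not_less)
  hence "hamming_dist u v \<le> card {k..<n}"
    unfolding hamming_dist_def by (rule card_mono[rotated]) simp
  thus ?thesis by simp
qed

section \<open>Finite subfields and the Frobenius map\<close>

lemma subfield_power_card:
  fixes K :: "'a::field set"
  assumes K: "is_subfield K" "finite K" and c: "c \<in> K"
  shows "c ^ card K = c"
proof (cases "c = 0")
  case True
  have "card K \<noteq> 0" using K by (auto simp: is_subfield_def)
  thus ?thesis using True by simp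
next
  case False
  have cl: "\<And>x y. x \<in> K \<Longrightarrow> y \<in> K \<Longrightarrow> x * y \<in> K"
    and inv: "\<And>x. x \<in> K \<Longrightarrow> x \<noteq> 0 \<Longrightarrow> inverse x \<in> K"
    using K unfolding is_subfield_def by auto
  \<comment> \<open>multiplication by \<open>c\<close> permutes \<open>K - {0}\<close>\<close>
  have "(\<Prod>y\<in>K-{0}. c * y) = (\<Prod>y\<in>K-{0}. y)"
    by (rule prod.reindex_bij_witness[of _ "\<lambda>y. y / c" "\<lambda>y. c * y"])
       (use False c in \<open>auto simp: cl inv divide_inverse\<close>)
  hence "c ^ card (K - {0}) = 1" using K(2) by (simp add: prod.distrib)
  moreover have "card K = Suc (card (K - {0}))"
    using K unfolding is_subfield_def by (metis card_Suc_Diff1)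
  ultimately show ?thesis by simp
qed

lemma subfield_power_card_power:
  fixes K :: "'a::field set"
  assumes "is_subfield K" "finite K" "c \<in> K"
  shows "c ^ (card K ^ i) = c"
proof (induction i)
  case (Suc i)
  have "c ^ (card K ^ Suc i) = (c ^ (card K ^ i)) ^ card K" by (metis power_Suc2 power_mult)
  thus ?case using Suc subfield_power_card[OF assms] by simp
qed simp

lemma of_nat_card_subfield:
  fixes K :: "'a::field set"
  assumes K: "is_subfield K" "finite K"
  shows "of_nat (card K) = (0::'a)"
proof -
  have cl: "\<And>x y. x \<in> K \<Longrightarrow> y \<in> K \<Longrightarrow> x + y \<in> K" and neg: "\<And>x. x \<in> K \<Longrightarrow> - x \<in> K"
    and one: "1 \<in> K"
    using K unfolding is_subfield_def by auto
  \<comment> \<open>translation by \<open>1\<close> permutes \<open>K\<close>\<close>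
  have "(\<Sum>y\<in>K. 1 + y) = (\<Sum>y\<in>K. y)"
    by (rule sum.reindex_bij_witness[of _ "\<lambda>y. y + - 1" "\<lambda>y. 1 + y"])
       (use cl neg one in \<open>auto simp: add.commute\<close>, metis cl neg one diff_conv_add_uminus)
  thus ?thesis by (simp add: sum.distrib)
qed

lemma add_power_subfield_card_power:
  fixes K :: "'a::field set"
  assumes "prime_power (card K)" "is_subfield K" "finite K"
  shows "(x + y :: 'a) ^ (card K ^ i) = x ^ (card K ^ i) + y ^ (card K ^ i)"
proof -
  obtain p e where p: "prime p" "card K = p ^ e"
    using assms(1) unfolding prime_power_def by auto
  have "CHAR('a) dvd p ^ e"
    using of_nat_card_subfield[OF assms(2,3)] p(2) by (metis of_nat_eq_0_iff_char_dvd)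
  moreover from this have "CHAR('a) > 0" using p(1) by (auto intro!: Nat.gr0I simp: prime_gt_0_nat)
  hence pc: "prime CHAR('a)" by (rule prime_CHAR_semidom)
  ultimately have "CHAR('a) = p" using p(1) by (meson prime_dvd_power primes_dvd_imp_eq)
  hence "card K ^ i = CHAR('a) ^ (e * i)" using p by (simp add: power_mult)
  thus ?thesis using freshmans_dream'[OF pc] by blast
qed

lemma prime_power_ge_2: "prime_power q \<Longrightarrow> 2 \<le> q"
  unfolding prime_power_def
  by (metis One_nat_def le_trans power_increasing power_one_right prime_ge_2_nat prime_gt_0_nat
      Suc_leI)

section \<open>Roots at independent points\<close>

lemma inj_on_lin_comb:
  assumes K: "is_subfield K" and ind: "lin_indep_over K g" and I: "I \<subseteq> {..<length g}"
  shows "inj_on (\<lambda>c. \<Sum>i\<in>I. c i * g ! i) (PiE I (\<lambda>_. K))"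
proof (rule inj_onI)
  fix c d assume c: "c \<in> PiE I (\<lambda>_. K)" and d: "d \<in> PiE I (\<lambda>_. K)"
    and eq: "(\<Sum>i\<in>I. c i * g ! i) = (\<Sum>i\<in>I. d i * g ! i)"
  define e where "e i = (if i \<in> I then c i - d i else 0)" for i
  have "(\<Sum>i<length g. e i * g ! i) = (\<Sum>i\<in>I. e i * g ! i)"
    by (rule sum.mono_neutral_right) (use I in \<open>auto simp: e_def\<close>)
  also have "\<dots> = (\<Sum>i\<in>I. c i * g ! i) - (\<Sum>i\<in>I. d i * g ! i)"
    by (simp add: e_def sum_subtractf[symmetric] algebra_simps)
  finally have "(\<Sum>i<length g. e i * g ! i) = 0" using eq by simp
  moreover have "x - y \<in> K" if "x \<in> K" "y \<in> K" for x y
    using K that unfolding is_subfield_def by (metis diff_conv_add_uminus)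
  hence "\<forall>i<length g. e i \<in> K"
    using PiE_mem[OF c] PiE_mem[OF d] K unfolding e_def is_subfield_def by auto
  ultimately have "\<forall>i<length g. e i = 0" using ind unfolding lin_indep_over_def by blast
  hence "\<forall>i\<in>I. c i = d i" using I unfolding e_def by auto
  thus "c = d" using c d by (auto intro: PiE_ext)
qed

lemma card_subfield_power_le_card_zeros:
  fixes L :: "'a::field \<Rightarrow> 'a" and K :: "'a set"
  assumes add: "\<And>x y. L (x + y) = L x + L y"
    and hom: "\<And>c x. c \<in> K \<Longrightarrow> L (c * x) = c * L x"
    and K: "is_subfield K"
    and ind: "lin_indep_over K g"
    and I: "I \<subseteq> {..<length g}"
    and zero: "\<And>i. i \<in> I \<Longrightarrow> L (g ! i) = 0"
    and fin: "finite {x. L x = 0}"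
  shows "card K ^ card I \<le> card {x. L x = 0}"
proof -
  define comb where "comb c = (\<Sum>i\<in>I. c i * g ! i)" for c
  have "inj_on comb (PiE I (\<lambda>_. K))"
    unfolding comb_def using K ind I by (rule inj_on_lin_comb)
  moreover have "L 0 + L 0 = L 0 + 0" using add[of 0 0] by simp
  hence "L 0 = 0" by (rule add_left_imp_eq)
  hence "L (sum f A) = (\<Sum>i\<in>A. L (f i))" for f :: "nat \<Rightarrow> 'a" and A
    by (induction A rule: infinite_finite_induct) (auto simp: add)
  hence "comb ` PiE I (\<lambda>_. K) \<subseteq> {x. L x = 0}"
    using zero by (auto simp: comb_def intro!: sum.neutral) (metis PiE_mem hom mult_zero_right)
  ultimately have "card (PiE I (\<lambda>_. K)) \<le> card {x. L x = 0}"
    using fin by (metis card_image card_mono)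
  moreover have "finite I" using I finite_subset by blast
  ultimately show ?thesis by (simp add: card_PiE)
qed

lemma card_vanishing_indices_le_qdeg:
  fixes h :: "nat \<Rightarrow> 'a::field"
  assumes pp: "prime_power q" and K: "is_subfield K" "finite K" "card K = q"
    and ind: "lin_indep_over K g"
    and supp: "\<And>i. D < i \<Longrightarrow> h i = 0" and nz: "h j \<noteq> 0"
    and I: "I \<subseteq> {..<length g}" and zero: "\<And>i. i \<in> I \<Longrightarrow> lin_eval q h (g ! i) = 0"
  shows "card I \<le> D"
proof -
  have q: "2 \<le> q" using pp by (rule prime_power_ge_2)
  have "lin_eval q h (x + y) = lin_eval q h x + lin_eval q h y" for x y
    using add_power_subfield_card_power[of K] pp K by (intro lin_eval_add) auto
  moreover have "lin_eval q h (c * x) = c * lin_eval q h x" if "c \<in> K" for c x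
    using subfield_power_card_power[of K c] that K by (intro lin_eval_mult_const) auto
  ultimately have "card K ^ card I \<le> card {x. lin_eval q h x = 0}"
    using finite_lin_eval_zeros[of q D h j, OF q supp nz] K(1) ind I zero
    by (intro card_subfield_power_le_card_zeros[of "lin_eval q h" K g I])
  hence "q ^ card I \<le> card {x. lin_eval q h x = 0}" using K(3) by simp
  also have "\<dots> \<le> q ^ D" by (rule card_lin_eval_zeros_le[of q D h j, OF q supp nz])
  finally show ?thesis using q by (simp add: power_le_imp_le_exp)
qed

section \<open>Deep holes of Gabidulin codes\<close>

locale gabidulin_code =
  fixes K :: "'a::{field,finite} set" and q n k :: nat and g :: "'a list"
  assumes prime_power: "prime_power q"
    and subfield: "is_subfield K" and card_subfield: "card K = q"
    and k_pos: "1 \<le> k" and k_less: "k < n"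
    and length_g: "length g = n" and indep: "lin_indep_over K g"
begin

lemma card_agreements_le:
  assumes v: "v \<in> qpolys_below (Suc D)" and w: "w \<in> qpolys_below (Suc D)" and "v \<noteq> w"
    and I: "I \<subseteq> {..<n}" and agree: "\<And>i. i \<in> I \<Longrightarrow> lin_eval q v (g ! i) = lin_eval q w (g ! i)"
  shows "card I \<le> D"
proof -
  obtain j where j: "v j - w j \<noteq> 0" using \<open>v \<noteq> w\<close> by auto
  have supp: "v i = 0" "w i = 0" if "D < i" for i
    using v w that by (auto simp: qpolys_below_def)
  show ?thesis
  proof (rule card_vanishing_indices_le_qdeg[of q K g D "\<lambda>i. v i - w i" j I,
        OF prime_power subfield _ card_subfield indep _ j])
    show "lin_eval q (\<lambda>i. v i - w i) (g ! i) = 0" if "i \<in> I" for i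
      using agree[OF that] lin_eval_diff[of D v w] supp by simp
  qed (use supp I length_g in auto)
qed

lemma take_eval_word_image: "(\<lambda>v. take k (eval_word q v g)) ` qpolys_below k = words k"
proof (rule card_subset_eq[OF finite_words])
  show sub: "(\<lambda>v. take k (eval_word q v g)) ` qpolys_below k \<subseteq> words k"
    using k_less length_g by (auto simp: words_def eval_word_def)
  have "inj_on (\<lambda>v. take k (eval_word q v g)) (qpolys_below k)"
  proof (rule inj_onI, rule ccontr)
    fix v w :: "nat \<Rightarrow> 'a"
    assume v: "v \<in> qpolys_below k" and w: "w \<in> qpolys_below k" and "v \<noteq> w"
      and eq: "take k (eval_word q v g) = take k (eval_word q w g)"
    have "lin_eval q v (g ! i) = lin_eval q w (g ! i)" if "i \<in> {..<k}" for i
      using arg_cong[OF eq, of "\<lambda>xs. xs ! i"] that k_less length_g by (simp add: eval_word_def)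
    hence "card {..<k} \<le> k - 1"
      using card_agreements_le[of v "k - 1" w "{..<k}"] v w \<open>v \<noteq> w\<close> k_pos k_less by simp
    thus False using k_pos by simp
  qed
  thus "card ((\<lambda>v. take k (eval_word q v g)) ` qpolys_below k) = card (words k :: 'a list set)"
    by (simp add: card_image card_qpolys_below card_words)
qed

lemma finite_gabidulin: "finite (gabidulin q k g)"
  by (rule finite_subset[OF _ finite_words[of n]])
     (auto simp: gabidulin_def eval_word_def words_def length_g)

lemma dist_to_code_le:
  assumes "length u = n"
  shows "dist_to_code u (gabidulin q k g) \<le> n - k"
proof -
  have "take k u \<in> (\<lambda>v. take k (eval_word q v g)) ` qpolys_below k"
    using assms k_less by (simp add: take_eval_word_image words_def)
  then obtain v where eq: "take k u = take k (eval_word q v g)" and v: "v \<in> qpolys_below k"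
    by (rule imageE)
  have "eval_word q v g \<in> gabidulin q k g" using v by (simp add: gabidulin_eq_image)
  hence "dist_to_code u (gabidulin q k g) \<le> hamming_dist u (eval_word q v g)"
    unfolding dist_to_code_def using finite_gabidulin by (blast intro: Min_le)
  also have "\<dots> \<le> n - k"
    using assms eq length_g by (intro hamming_dist_le_if_take_eq) (simp_all add: eval_word_def)
  finally show ?thesis .
qed

lemma hamming_dist_eval_word_ge:
  assumes f: "f \<in> linpolys" "f \<noteq> (\<lambda>_. 0)" "qdeg f = k" and c: "c \<in> gabidulin q k g"
  shows "n - k \<le> hamming_dist (eval_word q f g) c"
proof -
  obtain v where v: "v \<in> qpolys_below k" and cv: "c = eval_word q v g"
    using c by (auto simp: gabidulin_eq_image)
  have "f \<in> qpolys_below (Suc k)"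
    using coeff_eq_0_above_qdeg[OF f(1)] f(3) by (auto simp: qpolys_below_def)
  moreover have "f \<noteq> v" using coeff_qdeg_nonzero[OF f(1,2)] f(3) v by (auto simp: qpolys_below_def)
  ultimately have "card {i. i < n \<and> eval_word q f g ! i = c ! i} \<le> k"
    using v qpolys_below_mono[of k "Suc k"] length_g
    by (intro card_agreements_le[of f k v]) (auto simp: cv eval_word_def)
  thus ?thesis
    using hamming_dist_eq_diff_card_agree[of c "eval_word q f g"] length_g
    by (simp add: cv eval_word_def)
qed

lemma dist_to_code_eval_word:
  assumes "f \<in> linpolys" "f \<noteq> (\<lambda>_. 0)" "qdeg f = k"
  shows "dist_to_code (eval_word q f g) (gabidulin q k g) = n - k"
proof (rule antisym)
  show "dist_to_code (eval_word q f g) (gabidulin q k g) \<le> n - k"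
    by (rule dist_to_code_le) (simp add: eval_word_def length_g)
  have "gabidulin q k g \<noteq> {}" by (auto simp: gabidulin_eq_image qpolys_below_def)
  thus "n - k \<le> dist_to_code (eval_word q f g) (gabidulin q k g)"
    unfolding dist_to_code_def using finite_gabidulin hamming_dist_eval_word_ge[OF assms]
    by (subst Min_ge_iff) auto
qed

lemma covering_radius_gabidulin: "covering_radius n (gabidulin q k g) = n - k"
  unfolding covering_radius_def
proof (rule Max_eqI)
  show "finite ((\<lambda>u. dist_to_code u (gabidulin q k g)) ` words n)"
    by (intro finite_imageI finite_words)
  show "d \<le> n - k" if "d \<in> (\<lambda>u. dist_to_code u (gabidulin q k g)) ` words n" for d
    using that dist_to_code_le by (auto simp: words_def)
  define f :: "nat \<Rightarrow> 'a" where "f i = (if i = k then 1 else 0)" for i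
  have "f \<in> linpolys" "f \<noteq> (\<lambda>_. 0)" "qdeg f = k"
    using qdeg_eqI[of k f] by (auto simp: f_def fun_eq_iff)
  moreover have "eval_word q f g \<in> words n" by (simp add: eval_word_def words_def length_g)
  ultimately show "n - k \<in> (\<lambda>u. dist_to_code u (gabidulin q k g)) ` words n"
    using dist_to_code_eval_word by (metis image_eqI)
qed

lemma deep_hole_eval_word:
  assumes "f \<in> linpolys" "f \<noteq> (\<lambda>_. 0)" "qdeg f = k"
  shows "deep_hole n (gabidulin q k g) (eval_word q f g)"
  using dist_to_code_eval_word[OF assms] covering_radius_gabidulin length_g
  by (simp add: deep_hole_def words_def eval_word_def)

lemma inj_on_eval_word: "inj_on (\<lambda>f. eval_word q f g) (qpolys_below (Suc k))"
proof (rule inj_onI, rule ccontr)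
  fix f f' assume f: "f \<in> qpolys_below (Suc k)" and f': "f' \<in> qpolys_below (Suc k)"
    and eq: "eval_word q f g = eval_word q f' g" and "f \<noteq> f'"
  have "lin_eval q f (g ! i) = lin_eval q f' (g ! i)" if "i \<in> {..<n}" for i
    using arg_cong[OF eq, of "\<lambda>xs. xs ! i"] that length_g by (simp add: eval_word_def)
  hence "card {..<n} \<le> k"
    using card_agreements_le[of f k f' "{..<n}"] f f' \<open>f \<noteq> f'\<close> by simp
  thus False using k_less by simp
qed

lemma card_deep_holes_ge:
  assumes "card (UNIV :: 'a set) = q ^ m"
  shows "(q ^ m - 1) * q ^ (m * k) \<le> card {u. deep_hole n (gabidulin q k g) u}"
proof -
  define S :: "(nat \<Rightarrow> 'a) set" where "S = qpolys_below (Suc k) - qpolys_below k"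
  have "(q ^ m - 1) * q ^ (m * k) = card S"
    using card_qpolys_below_Suc_diff[of k, where 'a='a] assms by (simp add: S_def power_mult)
  also have "\<dots> = card ((\<lambda>f. eval_word q f g) ` S)"
    using inj_on_subset[OF inj_on_eval_word] by (simp add: S_def card_image)
  also have "\<dots> \<le> card {u. deep_hole n (gabidulin q k g) u}"
  proof (rule card_mono)
    show "finite {u. deep_hole n (gabidulin q k g) u}"
      by (rule finite_subset[OF _ finite_words[of n]]) (auto simp: deep_hole_def)
    show "(\<lambda>f. eval_word q f g) ` S \<subseteq> {u. deep_hole n (gabidulin q k g) u}"
      using deep_hole_eval_word[OF qdeg_eq_if_mem_qpolys_below_Suc_diff] by (auto simp: S_def)
  qed
  finally show ?thesis .
qed

end

theorem mainTheorem5: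
  fixes K :: "'a::{field,finite} set" and q m n k :: nat and g :: "'a list"
  assumes "prime_power q"
    and "is_subfield K" and "card K = q"
    and "card (UNIV :: 'a set) = q ^ m"
    and "1 \<le> k" and "k < n" and "n \<le> m"
    and "length g = n" and "lin_indep_over K g"
  shows "(\<forall>f\<in>linpolys. f \<noteq> (\<lambda>_. 0) \<and> qdeg f = k \<longrightarrow>
            dist_to_code (eval_word q f g) (gabidulin q k g) = n - k \<and>
            deep_hole n (gabidulin q k g) (eval_word q f g))
         \<and> covering_radius n (gabidulin q k g :: 'a list set) = n - k
         \<and> card {u. deep_hole n (gabidulin q k g) u} \<ge> (q ^ m - 1) * q ^ (m * k)"
proof -
  interpret gabidulin_code K q n k g
    using assms by unfold_locales
  show ?thesis
    using dist_to_code_eval_word deep_hole_eval_word covering_radius_gabidulin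
      card_deep_holes_ge[OF assms(4)]
    by blast
qed

end
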